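(* Let $A=\{\mathbf{a}_1,\dots,\mathbf{a}_m\}\subset\mathbb{Z}^n$ be such that $\mathbb{N}A$ is an affine semigroup, and let $E_1,E_2$ be nonempty disjoint subsets of $\{1,\dots,m\}$ with $E_1\cup E_2=\{1,\dots,m\}$. If $\mathbb{N}A$ is the gluing of $\mathbb{N}A^{E_1}$ and $\mathbb{N}A^{E_2}$, then $\sigma=\mathrm{pos}_{\mathbb{Q}}(A)$ is the direct sum $\sigma_{E_1}\oplus\sigma_{E_2}$, i.e. there is $\mathbf{a}\in\sigma_{E_1}\cap\sigma_{E_2}$ with $\mathrm{span}_{\mathbb{Q}}(\sigma_{E_1})\cap\mathrm{span}_{\mathbb{Q}}(\sigma_{E_2})=\mathbb{Q}\mathbf{a}$, and $\sigma=\mathrm{pos}_{\mathbb{Q}}(\sigma_{E_1}\cup\sigma_{E_2})$.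
   Context: $\mathbb{N}A=\{\sum n_i\mathbf{a}_i: n_i\in\mathbb{N}\}$. An affine semigroup is a finitely generated subsemigroup $S$ of $\mathbb{Z}^n$ with $S\cap(-S)=\{\mathbf 0\}$. For $E\subset\{1,\dots,m\}$, $A^E=\{\mathbf{a}_i:i\in E\}$ and $\sigma_E=\mathrm{pos}_{\mathbb{Q}}(A^E)$ (nonnegative rational combinations). $\mathbb{N}A$ is the gluing of $\mathbb{N}A^{E_1}$ and $\mathbb{N}A^{E_2}$ if there is a nonzero $\mathbf{a}\in\mathbb{N}A^{E_1}\cap\mathbb{N}A^{E_2}$ with $\mathbb{Z}\mathbf{a}=\mathbb{Z}A^{E_1}\cap\mathbb{Z}A^{E_2}$. *)

theory Defs
  imports "HOL-Analysis.Analysis"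
begin

text \<open>Vectors of Z^n are int^'n, vectors of Q^n are rat^'n (the dimension n is the
finite index type 'n). The generators a_1..a_m are a family a :: nat => int^'n on {1..m}.\<close>

definition NA :: "(nat \<Rightarrow> int ^ 'n) \<Rightarrow> nat set \<Rightarrow> (int ^ 'n) set" where
  "NA a E = {\<Sum>i\<in>E. int (c i) *s a i | c. True}"

definition ZA :: "(nat \<Rightarrow> int ^ 'n) \<Rightarrow> nat set \<Rightarrow> (int ^ 'n) set" where
  "ZA a E = {\<Sum>i\<in>E. c i *s a i | c. True}"

definition affine_semigroup :: "(int ^ 'n) set \<Rightarrow> bool" where
  "affine_semigroup S \<longleftrightarrow>
     (\<exists>G. finite G \<and> S = {\<Sum>g\<in>G. int (c g) *s g | c. True}) \<and>
     S \<inter> uminus ` S = {0}"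

definition is_gluing :: "(nat \<Rightarrow> int ^ 'n) \<Rightarrow> nat set \<Rightarrow> nat set \<Rightarrow> bool" where
  "is_gluing a E1 E2 \<longleftrightarrow>
     (\<exists>v. v \<noteq> 0 \<and> v \<in> NA a E1 \<inter> NA a E2 \<and>
          {k *s v | k. True} = ZA a E1 \<inter> ZA a E2)"

definition qvec :: "int ^ 'n \<Rightarrow> rat ^ 'n" where
  "qvec v = (\<chi> j. rat_of_int (v $ j))"

definition posQ :: "(rat ^ 'n) set \<Rightarrow> (rat ^ 'n) set" where
  "posQ S = {\<Sum>v\<in>T. c v *s v | T c. finite T \<and> T \<subseteq> S \<and> (\<forall>v\<in>T. c v \<ge> 0)}"

definition spanQ :: "(rat ^ 'n) set \<Rightarrow> (rat ^ 'n) set" where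
  "spanQ S = {\<Sum>v\<in>T. c v *s v | T c. finite T \<and> T \<subseteq> S}"

definition sigma :: "(nat \<Rightarrow> int ^ 'n) \<Rightarrow> nat set \<Rightarrow> (rat ^ 'n) set" where
  "sigma a E = posQ ((\<lambda>i. qvec (a i)) ` E)"

end

theory Submission imports Defs begin

(* The rational vectors having a positive integer multiple in Z A^E form a Q-subspace
   containing A^E, so every x in span_Q(A^E) has such a multiple. Hence if x lies in both
   Q-spans, then D1 D2 x lies in Z A^E1 \<inter> Z A^E2 = Z v for some positive integers D1, D2,
   and x lies in Q v; conversely v \<in> N A^Ei \<subseteq> \<sigma>_Ei. The cone identity only uses that
   pos_Q is a closure operator and A = A^E1 \<union> A^E2. *)

lemma posQ_mono: "S \<subseteq> T \<Longrightarrow> posQ S \<subseteq> posQ T"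
  unfolding posQ_def by blast

lemma posQ_superset: "S \<subseteq> posQ S"
proof
  fix x assume "x \<in> S"
  then show "x \<in> posQ S"
    unfolding posQ_def by (intro CollectI exI[of _ "{x}"] exI[of _ "\<lambda>_. 1"]) auto
qed

lemma posQ_zero: "0 \<in> posQ S"
  unfolding posQ_def by (intro CollectI exI[of _ "{}"]) auto

lemma posQ_scale:
  assumes "0 \<le> r" "x \<in> posQ S"
  shows "r *s x \<in> posQ S"
proof -
  obtain T c where x: "x = (\<Sum>v\<in>T. c v *s v)" "finite T" "T \<subseteq> S" "\<forall>v\<in>T. 0 \<le> c v"
    using assms(2) unfolding posQ_def by blast
  have "r *s x = (\<Sum>v\<in>T. (r * c v) *s v)"
    unfolding x(1) by (simp add: vec.scale_sum_right)
  with x assms(1) show ?thesis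
    unfolding posQ_def by (intro CollectI exI[of _ T] exI[of _ "\<lambda>v. r * c v"]) auto
qed

lemma posQ_add:
  assumes "x \<in> posQ S" "y \<in> posQ S"
  shows "x + y \<in> posQ S"
proof -
  obtain T c where x: "x = (\<Sum>v\<in>T. c v *s v)" "finite T" "T \<subseteq> S" "\<forall>v\<in>T. 0 \<le> c v"
    using assms(1) unfolding posQ_def by blast
  obtain U d where y: "y = (\<Sum>v\<in>U. d v *s v)" "finite U" "U \<subseteq> S" "\<forall>v\<in>U. 0 \<le> d v"
    using assms(2) unfolding posQ_def by blast
  define e where "e v = (if v \<in> T then c v else 0) + (if v \<in> U then d v else 0)" for v
  have "x + y = (\<Sum>v\<in>T \<union> U. e v *s v)"
    using x(1,2) y(1,2) unfolding e_def
    by (simp add: vector_sadd_rdistrib sum.distrib if_distrib[of "\<lambda>r. r *s v" for v]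
        sum.If_cases Int_absorb1 Int_absorb2)
  with x y show ?thesis
    unfolding posQ_def by (intro CollectI exI[of _ "T \<union> U"] exI[of _ e]) (auto simp: e_def)
qed

lemma posQ_sum: "(\<And>i. i \<in> I \<Longrightarrow> f i \<in> posQ S) \<Longrightarrow> sum f I \<in> posQ S"
  by (induction I rule: infinite_finite_induct) (auto intro: posQ_zero posQ_add)

lemma posQ_minimal:
  assumes "S \<subseteq> C" "0 \<in> C" "\<And>x y. x \<in> C \<Longrightarrow> y \<in> C \<Longrightarrow> x + y \<in> C"
    "\<And>r x. 0 \<le> r \<Longrightarrow> x \<in> C \<Longrightarrow> r *s x \<in> C"
  shows "posQ S \<subseteq> C"
proof
  fix x assume "x \<in> posQ S"
  then obtain T c where x: "x = (\<Sum>v\<in>T. c v *s v)" "finite T" "T \<subseteq> S" "\<forall>v\<in>T. 0 \<le> c v"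
    unfolding posQ_def by blast
  from x(2-4) have "(\<Sum>v\<in>T. c v *s v) \<in> C"
    by (induction T rule: finite_induct) (use assms in auto)
  with x(1) show "x \<in> C" by simp
qed

lemma posQ_posQ: "posQ (posQ S) = posQ S"
  by (intro equalityI posQ_minimal posQ_superset) (auto intro: posQ_zero posQ_add posQ_scale)

lemma spanQ_eq_span: "spanQ S = vec.span S"
  unfolding spanQ_def vec.span_explicit by blast

lemma posQ_subset_span: "posQ S \<subseteq> vec.span S"
  unfolding posQ_def vec.span_explicit by blast

lemma span_posQ: "vec.span (posQ S) = vec.span S"
  using posQ_subset_span posQ_superset vec.span_superset by (metis vec.span_eq subset_trans)

lemma qvec_add: "qvec (x + y) = qvec x + qvec y"
  unfolding qvec_def by (simp add: vec_eq_iff)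

lemma qvec_scale: "qvec (k *s x) = of_int k *s qvec x"
  unfolding qvec_def by (simp add: vec_eq_iff)

lemma qvec_sum: "qvec (\<Sum>i\<in>I. f i) = (\<Sum>i\<in>I. qvec (f i))"
  unfolding qvec_def by (simp add: vec_eq_iff of_int_sum)

lemma qvec_eq_iff: "qvec x = qvec y \<longleftrightarrow> x = y"
  unfolding qvec_def by (simp add: vec_eq_iff)

lemma qvec_zero: "qvec 0 = 0"
  unfolding qvec_def by (simp add: vec_eq_iff)

lemma ZA_zero: "0 \<in> ZA a E"
  unfolding ZA_def by (intro CollectI exI[of _ "\<lambda>_. 0"]) simp

lemma ZA_add:
  assumes "x \<in> ZA a E" "y \<in> ZA a E"
  shows "x + y \<in> ZA a E"
proof -
  obtain c d where "x = (\<Sum>i\<in>E. c i *s a i)" "y = (\<Sum>i\<in>E. d i *s a i)"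
    using assms unfolding ZA_def by blast
  then have "x + y = (\<Sum>i\<in>E. (c i + d i) *s a i)"
    by (simp add: sum.distrib vector_sadd_rdistrib)
  then show ?thesis unfolding ZA_def by (intro CollectI exI[of _ "\<lambda>i. c i + d i"]) simp
qed

lemma ZA_scale:
  assumes "x \<in> ZA a E"
  shows "k *s x \<in> ZA a E"
proof -
  obtain c where "x = (\<Sum>i\<in>E. c i *s a i)"
    using assms unfolding ZA_def by blast
  then have "k *s x = (\<Sum>i\<in>E. (k * c i) *s a i)"
    by (simp add: vec_eq_iff sum_distrib_left mult.assoc)
  then show ?thesis unfolding ZA_def by (intro CollectI exI[of _ "\<lambda>i. k * c i"]) simp
qed

lemma generator_in_ZA:
  assumes "finite E" "i \<in> E"
  shows "a i \<in> ZA a E"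
proof -
  have "(\<Sum>j\<in>E. (if j = i then 1 else 0) *s a j) = a i"
    using assms by (simp add: if_distrib[of "\<lambda>k. k *s a j" for j] cong: if_cong)
  then show ?thesis unfolding ZA_def by (intro CollectI exI[of _ "\<lambda>j. if j = i then 1 else 0"]) simp
qed

lemma qvec_ZA_subset_span: "qvec ` ZA a E \<subseteq> vec.span ((\<lambda>i. qvec (a i)) ` E)"
proof
  fix x assume "x \<in> qvec ` ZA a E"
  then obtain c where "x = (\<Sum>i\<in>E. of_int (c i) *s qvec (a i))"
    unfolding ZA_def by (auto simp: qvec_sum qvec_scale)
  then show "x \<in> vec.span ((\<lambda>i. qvec (a i)) ` E)"
    by (auto intro!: vec.span_sum vec.span_scale intro: vec.span_base)
qed

lemma subspace_integral_multiples_in_ZA: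
  "vec.subspace {x. \<exists>D::int. D > 0 \<and> (\<exists>y\<in>ZA a E. of_int D *s x = qvec y)}"
  (is "vec.subspace ?W")
proof (rule vec.subspaceI)
  show "0 \<in> ?W"
    using ZA_zero[of a E] by (auto intro!: exI[of _ 1] bexI[of _ 0] simp: qvec_zero)
next
  fix x x' assume "x \<in> ?W" "x' \<in> ?W"
  then obtain D D' :: int and y y' where
    "D > 0" "y \<in> ZA a E" "of_int D *s x = qvec y"
    "D' > 0" "y' \<in> ZA a E" "of_int D' *s x' = qvec y'"
    by blast
  have "of_int (D * D') *s (x + x') = of_int D' *s (of_int D *s x) + of_int D *s (of_int D' *s x')"
    by (simp add: vec.scale_right_distrib vec.scale_scale mult.commute)
  also have "\<dots> = qvec (D' *s y + D *s y')"
    by (simp add: \<open>of_int D *s x = qvec y\<close> \<open>of_int D' *s x' = qvec y'\<close> qvec_add qvec_scale)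
  finally have "of_int (D * D') *s (x + x') = qvec (D' *s y + D *s y')" .
  moreover have "D' *s y + D *s y' \<in> ZA a E"
    using \<open>y \<in> ZA a E\<close> \<open>y' \<in> ZA a E\<close> by (intro ZA_add ZA_scale)
  moreover have "D * D' > 0" using \<open>D > 0\<close> \<open>D' > 0\<close> by simp
  ultimately show "x + x' \<in> ?W" by blast
next
  fix q x assume "x \<in> ?W"
  then obtain D :: int and y where "D > 0" "y \<in> ZA a E" "of_int D *s x = qvec y"
    by blast
  obtain n d where nd: "quotient_of q = (n, d)" by fastforce
  have "d > 0" using quotient_of_denom_pos[OF nd] .
  have "q * of_int d = of_int n"
    using quotient_of_div[OF nd] \<open>d > 0\<close> by simp
  then have "of_int (d * D) *s (q *s x) = of_int n *s (of_int D *s x)"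
    by (metis mult.commute mult.left_commute of_int_mult vec.scale_scale)
  also have "\<dots> = qvec (n *s y)"
    by (simp add: \<open>of_int D *s x = qvec y\<close> qvec_scale)
  finally have "of_int (d * D) *s (q *s x) = qvec (n *s y)" .
  moreover have "n *s y \<in> ZA a E" using \<open>y \<in> ZA a E\<close> by (rule ZA_scale)
  moreover have "d * D > 0" using \<open>d > 0\<close> \<open>D > 0\<close> by simp
  ultimately show "q *s x \<in> ?W" by blast
qed

lemma span_integral_multiple_in_ZA:
  assumes "finite E" "x \<in> vec.span ((\<lambda>i. qvec (a i)) ` E)"
  obtains D :: int and y where "D > 0" "y \<in> ZA a E" "of_int D *s x = qvec y"
proof -
  let ?W = "{x. \<exists>D::int. D > 0 \<and> (\<exists>y\<in>ZA a E. of_int D *s x = qvec y)}"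
  have "(\<lambda>i. qvec (a i)) ` E \<subseteq> ?W"
  proof
    fix x assume "x \<in> (\<lambda>i. qvec (a i)) ` E"
    then obtain i where "i \<in> E" "x = qvec (a i)" by blast
    then have "of_int (1::int) *s x = qvec (a i)" "a i \<in> ZA a E"
      using generator_in_ZA[OF assms(1)] by auto
    then show "x \<in> ?W" using zero_less_one by blast
  qed
  then have "x \<in> ?W"
    using vec.span_minimal[OF _ subspace_integral_multiples_in_ZA] assms(2) by blast
  with that show ?thesis by blast
qed

lemma span_Int_span_eq_line:
  assumes "finite E1" "finite E2"
    and lattice_Int: "ZA a E1 \<inter> ZA a E2 = {k *s v | k. True}"
  shows "vec.span ((\<lambda>i. qvec (a i)) ` E1) \<inter> vec.span ((\<lambda>i. qvec (a i)) ` E2)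
           = {q *s qvec v | q. True}"
proof (intro equalityI subsetI)
  fix x assume x: "x \<in> vec.span ((\<lambda>i. qvec (a i)) ` E1) \<inter> vec.span ((\<lambda>i. qvec (a i)) ` E2)"
  obtain D1 :: int and y1 where D1: "D1 > 0" "y1 \<in> ZA a E1" "of_int D1 *s x = qvec y1"
    using span_integral_multiple_in_ZA[OF assms(1)] x by blast
  obtain D2 :: int and y2 where D2: "D2 > 0" "y2 \<in> ZA a E2" "of_int D2 *s x = qvec y2"
    using span_integral_multiple_in_ZA[OF assms(2)] x by blast
  have y1: "qvec (D2 *s y1) = of_int (D1 * D2) *s x"
    by (simp add: qvec_scale vec.scale_scale mult.commute flip: D1(3))
  have "qvec (D1 *s y2) = of_int (D1 * D2) *s x"
    by (simp add: qvec_scale vec.scale_scale flip: D2(3))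
  with y1 have "D2 *s y1 = D1 *s y2" by (metis qvec_eq_iff)
  then have "D2 *s y1 \<in> ZA a E1 \<inter> ZA a E2"
    using ZA_scale[OF D1(2), of D2] ZA_scale[OF D2(2), of D1] by simp
  then obtain k where "D2 *s y1 = k *s v" using lattice_Int by blast
  with y1 have xk: "of_int (D1 * D2) *s x = of_int k *s qvec v" by (simp add: qvec_scale)
  have "x = inverse (of_int (D1 * D2)) *s (of_int (D1 * D2) *s x)"
    using D1(1) D2(1) by (simp add: vec.scale_scale field_simps)
  also have "\<dots> = (of_int k / of_int (D1 * D2)) *s qvec v"
    unfolding xk by (simp add: vec.scale_scale divide_inverse mult.commute)
  finally show "x \<in> {q *s qvec v | q. True}" by blast
next
  fix x assume "x \<in> {q *s qvec v | q. True}"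
  then obtain q where x: "x = q *s qvec v" by blast
  have "v \<in> ZA a E1 \<inter> ZA a E2"
    using lattice_Int by (metis (mono_tags, lifting) mem_Collect_eq vector_smult_lid)
  then have "qvec v \<in> vec.span ((\<lambda>i. qvec (a i)) ` E1) \<inter> vec.span ((\<lambda>i. qvec (a i)) ` E2)"
    using qvec_ZA_subset_span by blast
  then show "x \<in> vec.span ((\<lambda>i. qvec (a i)) ` E1) \<inter> vec.span ((\<lambda>i. qvec (a i)) ` E2)"
    unfolding x by (simp add: vec.span_scale)
qed

lemma qvec_NA_subset_sigma: "qvec ` NA a E \<subseteq> sigma a E"
proof
  fix x assume "x \<in> qvec ` NA a E"
  then obtain c where "x = (\<Sum>i\<in>E. of_nat (c i) *s qvec (a i))"
    unfolding NA_def by (auto simp: qvec_sum qvec_scale)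
  then show "x \<in> sigma a E"
    unfolding sigma_def by (auto intro!: posQ_sum posQ_scale intro: posQ_superset[THEN subsetD])
qed

lemma spanQ_sigma: "spanQ (sigma a E) = vec.span ((\<lambda>i. qvec (a i)) ` E)"
  by (simp add: sigma_def spanQ_eq_span span_posQ)

lemma sigma_Un: "sigma a (E1 \<union> E2) = posQ (sigma a E1 \<union> sigma a E2)"
proof
  show "sigma a (E1 \<union> E2) \<subseteq> posQ (sigma a E1 \<union> sigma a E2)"
    unfolding sigma_def image_Un by (intro posQ_mono Un_mono posQ_superset)
  have "sigma a E1 \<union> sigma a E2 \<subseteq> posQ ((\<lambda>i. qvec (a i)) ` (E1 \<union> E2))"
    unfolding sigma_def by (intro Un_least posQ_mono) auto
  then show "posQ (sigma a E1 \<union> sigma a E2) \<subseteq> sigma a (E1 \<union> E2)"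
    unfolding sigma_def[of a "E1 \<union> E2"] by (metis posQ_mono posQ_posQ)
qed

theorem proposition3p1:
  fixes a :: "nat \<Rightarrow> int ^ 'n" and m :: nat and E1 E2 :: "nat set"
  assumes "affine_semigroup (NA a {1..m})"
    and "E1 \<noteq> {}" and "E2 \<noteq> {}" and "E1 \<inter> E2 = {}" and "E1 \<union> E2 = {1..m}"
    and "is_gluing a E1 E2"
  shows "(\<exists>v \<in> sigma a E1 \<inter> sigma a E2.
            spanQ (sigma a E1) \<inter> spanQ (sigma a E2) = {q *s v | q. True})
         \<and> sigma a {1..m} = posQ (sigma a E1 \<union> sigma a E2)"
proof -
  have "finite E1" "finite E2"
    using \<open>E1 \<union> E2 = {1..m}\<close> by (metis finite_Un finite_atLeastAtMost)+
  obtain v where "v \<in> NA a E1" "v \<in> NA a E2" and "{k *s v | k. True} = ZA a E1 \<inter> ZA a E2"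
    using \<open>is_gluing a E1 E2\<close> unfolding is_gluing_def by blast
  then have "qvec v \<in> sigma a E1 \<inter> sigma a E2"
    using qvec_NA_subset_sigma by blast
  moreover have "spanQ (sigma a E1) \<inter> spanQ (sigma a E2) = {q *s qvec v | q. True}"
    unfolding spanQ_sigma
    by (rule span_Int_span_eq_line) (use \<open>finite E1\<close> \<open>finite E2\<close> \<open>{k *s v | k. True} = _\<close> in auto)
  moreover have "sigma a {1..m} = posQ (sigma a E1 \<union> sigma a E2)"
    using sigma_Un \<open>E1 \<union> E2 = {1..m}\<close> by metis
  ultimately show ?thesis by blast
qed

end
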